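(* Let $G$ be an oriented graph derived from a Burling tree $(T,r,\ell,c)$, let $H$ be a hole of $G$, let $p$ be the pivot of $H$, and let $C$ be the connected component of $G\setminus N^-[p]$ that contains $H\setminus N^-[p]$. Then every vertex of $C$ is a descendant of $p$ in $T$.
   Context: Graphs are finite, without loops or multiple edges; oriented graphs have no pair of opposite arcs; connectivity of an oriented graph refers to its underlying graph. In a rooted tree $T$ with root $r$, each non-root vertex $v$ has a parent $p(v)$; children, leaves, ancestors and descendants are as usual (every vertex is an ancestor and a descendant of itself). A branch is a sequence $v_1\dots v_k$ ($k\ge0$) with $v_i$ the parent of $v_{i+1}$; it starts at $v_1$. A Burling tree is a 4-tuple $(T,r,\ell,c)$: $T$ a rooted tree with root $r$; $\ell$ assigns to each non-leaf vertex $v$ one of its children $\ell(v)$ (the last-born of $v$); $c$ assigns to every vertex $v$ that is neither the root nor a last-born the vertex-set of a (possibly empty) branch starting at $\ell(p(v))$, and $c(v)=\emptyset$ if $v$ is the root or a last-born. The oriented graph fully derived from it has vertex-set $V(T)$ and an arc $uv$ iff $v\in c(u)$; an oriented graph is derived from the Burling tree if it is an induced subgraph of the fully derived one. $N^-[v]$ denotes $v$ together with its in-neighbors. A hole of an oriented graph is an induced cycle of length at least $4$ of its underlying graph. If $G$ is derived from $T$ and $H$ is a hole of $G$, then (as established in the paper) $H$ with the inherited orientation has exactly two sources, called its antennas, and exactly two sinks; exactly one of these sinks is adjacent to both antennas and is an ancestor in $T$ of all vertices of $H$ other than the antennas: it is the pivot of $H$; the other sink is the bottom of $H$. *)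

theory Defs
  imports Main
begin

text \<open>Rooted tree on a finite vertex set V with root r and parent function par
  (par r is irrelevant). Every vertex reaches the root by iterating par.\<close>
definition rooted_tree :: "'a set \<Rightarrow> 'a \<Rightarrow> ('a \<Rightarrow> 'a) \<Rightarrow> bool" where
  "rooted_tree V r par \<longleftrightarrow> finite V \<and> r \<in> V \<and> (\<forall>v \<in> V - {r}. par v \<in> V)
     \<and> (\<forall>v \<in> V. \<exists>k. (par ^^ k) v = r)"

text \<open>u is an ancestor of v (v a descendant of u); every vertex is its own ancestor.\<close>
definition anc :: "'a set \<Rightarrow> 'a \<Rightarrow> ('a \<Rightarrow> 'a) \<Rightarrow> 'a \<Rightarrow> 'a \<Rightarrow> bool" where
  "anc V r par u v \<longleftrightarrow> v \<in> V \<and> (\<exists>k. (\<forall>i<k. (par ^^ i) v \<noteq> r) \<and> (par ^^ k) v = u)"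

definition children :: "'a set \<Rightarrow> 'a \<Rightarrow> ('a \<Rightarrow> 'a) \<Rightarrow> 'a \<Rightarrow> 'a set" where
  "children V r par v = {u \<in> V - {r}. par u = v}"

definition branch_set :: "'a set \<Rightarrow> 'a \<Rightarrow> ('a \<Rightarrow> 'a) \<Rightarrow> 'a \<Rightarrow> 'a set \<Rightarrow> bool" where
  "branch_set V r par s B \<longleftrightarrow>
     B = {} \<or> (\<exists>d. anc V r par s d \<and> B = {w. anc V r par s w \<and> anc V r par w d})"

definition burling_tree ::
  "'a set \<Rightarrow> 'a \<Rightarrow> ('a \<Rightarrow> 'a) \<Rightarrow> ('a \<Rightarrow> 'a) \<Rightarrow> ('a \<Rightarrow> 'a set) \<Rightarrow> bool" where
  "burling_tree V r par l c \<longleftrightarrow> rooted_tree V r par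
     \<and> (\<forall>v \<in> V. children V r par v \<noteq> {} \<longrightarrow> l v \<in> children V r par v)
     \<and> (\<forall>v \<in> V. (v = r \<or> l (par v) = v) \<longrightarrow> c v = {})
     \<and> (\<forall>v \<in> V - {r}. l (par v) \<noteq> v \<longrightarrow> branch_set V r par (l (par v)) (c v))"

text \<open>The oriented graph derived from the Burling tree with vertex set S \<subseteq> V
  (induced subgraph of the fully derived graph): arc u v iff v \<in> c u.\<close>
definition arc :: "('a \<Rightarrow> 'a set) \<Rightarrow> 'a set \<Rightarrow> 'a \<Rightarrow> 'a \<Rightarrow> bool" where
  "arc c S u v \<longleftrightarrow> u \<in> S \<and> v \<in> S \<and> v \<in> c u"

definition adj :: "('a \<Rightarrow> 'a set) \<Rightarrow> 'a set \<Rightarrow> 'a \<Rightarrow> 'a \<Rightarrow> bool" where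
  "adj c S u v \<longleftrightarrow> arc c S u v \<or> arc c S v u"

definition is_hole :: "('a \<Rightarrow> 'a set) \<Rightarrow> 'a set \<Rightarrow> 'a set \<Rightarrow> bool" where
  "is_hole c S H \<longleftrightarrow> H \<subseteq> S \<and> (\<exists>xs. distinct xs \<and> set xs = H \<and> length xs \<ge> 4 \<and>
     (\<forall>i < length xs. \<forall>j < length xs.
        adj c S (xs ! i) (xs ! j) \<longleftrightarrow> (j = Suc i mod length xs \<or> i = Suc j mod length xs)))"

definition source_in :: "('a \<Rightarrow> 'a set) \<Rightarrow> 'a set \<Rightarrow> 'a set \<Rightarrow> 'a \<Rightarrow> bool" where
  "source_in c S H v \<longleftrightarrow> v \<in> H \<and> \<not> (\<exists>u \<in> H. arc c S u v)"

definition sink_in :: "('a \<Rightarrow> 'a set) \<Rightarrow> 'a set \<Rightarrow> 'a set \<Rightarrow> 'a \<Rightarrow> bool" where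
  "sink_in c S H v \<longleftrightarrow> v \<in> H \<and> \<not> (\<exists>w \<in> H. arc c S v w)"

text \<open>Pivot of a hole H: the sink adjacent to both antennas (the sources of H) that is
  an ancestor of all vertices of H other than the antennas.\<close>
definition is_pivot ::
  "'a set \<Rightarrow> 'a \<Rightarrow> ('a \<Rightarrow> 'a) \<Rightarrow> ('a \<Rightarrow> 'a set) \<Rightarrow> 'a set \<Rightarrow> 'a set \<Rightarrow> 'a \<Rightarrow> bool" where
  "is_pivot V r par c S H p \<longleftrightarrow> sink_in c S H p
     \<and> (\<forall>a. source_in c S H a \<longrightarrow> adj c S p a)
     \<and> (\<forall>v \<in> H. \<not> source_in c S H v \<longrightarrow> anc V r par p v)"

definition closed_in_nbhd :: "('a \<Rightarrow> 'a set) \<Rightarrow> 'a set \<Rightarrow> 'a \<Rightarrow> 'a set" where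
  "closed_in_nbhd c S p = insert p {u. arc c S u p}"

definition is_component :: "('a \<Rightarrow> 'a set) \<Rightarrow> 'a set \<Rightarrow> 'a set \<Rightarrow> 'a set \<Rightarrow> bool" where
  "is_component c S X C \<longleftrightarrow>
     (\<exists>x \<in> X. C = {y. (\<lambda>u v. u \<in> X \<and> v \<in> X \<and> adj c S u v)\<^sup>*\<^sup>* x y})"

end

theory Submission
  imports Defs
begin

text \<open>Let \<open>X\<close> be the complement of \<open>N\<^sup>-[p]\<close>. Descendants of \<open>p\<close> in \<open>X\<close> are closed under
  adjacency within \<open>X\<close>. An out-neighbour of a descendant \<open>u \<noteq> p\<close> lies on a branch starting at
  a sibling of \<open>u\<close>, so below \<open>p\<close>. If \<open>u\<close> lies on the branch \<open>c v\<close> starting at a sibling \<open>s\<close>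
  of \<open>v\<close>, then \<open>s\<close> and \<open>p\<close> are comparable ancestors of \<open>u\<close>; were \<open>s\<close> an ancestor of \<open>p\<close>, the branch
  would pass through \<open>p\<close> and \<open>v\<close> would be an in-neighbour of \<open>p\<close>, so \<open>p\<close> is strictly above \<open>s\<close>
  and hence above \<open>v\<close>. The hole contains a vertex at distance two from \<open>p\<close>; not being
  adjacent to \<open>p\<close>, it is not an antenna, so it is a descendant of \<open>p\<close> in \<open>X\<close>, and it lies
  in \<open>C\<close>.\<close>

lemma funpow_parent_in_tree:
  assumes "rooted_tree V r par" "x \<in> V" "\<forall>i<k. (par ^^ i) x \<noteq> r"
  shows "(par ^^ k) x \<in> V"
  using assms(3)
proof (induction k)
  case 0
  then show ?case using assms(2) by simp
next
  case (Suc k)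
  then have "(par ^^ k) x \<in> V" "(par ^^ k) x \<noteq> r" by auto
  then show ?case using assms(1) unfolding rooted_tree_def by auto
qed

lemma anc_funpow:
  assumes "rooted_tree V r par" "x \<in> V" "\<forall>i<k. (par ^^ i) x \<noteq> r" "j \<le> k"
  shows "anc V r par ((par ^^ k) x) ((par ^^ j) x)"
proof -
  have "(par ^^ j) x \<in> V"
    using funpow_parent_in_tree[OF assms(1,2)] assms(3,4) by simp
  moreover have shift: "(par ^^ i) ((par ^^ j) x) = (par ^^ (i + j)) x" for i
    by (simp add: funpow_add)
  then have "\<forall>i<k - j. (par ^^ i) ((par ^^ j) x) \<noteq> r"
    using assms(3) by auto
  moreover have "(par ^^ (k - j)) ((par ^^ j) x) = (par ^^ k) x"
    using assms(4) shift by simp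
  ultimately show ?thesis unfolding anc_def by blast
qed

lemma anc_refl: "v \<in> V \<Longrightarrow> anc V r par v v"
  unfolding anc_def by (auto intro: exI[of _ 0])

lemma anc_trans:
  assumes "anc V r par a b" "anc V r par b x"
  shows "anc V r par a x"
proof -
  obtain k1 where k1: "\<forall>i<k1. (par ^^ i) b \<noteq> r" "(par ^^ k1) b = a"
    using assms(1) unfolding anc_def by blast
  obtain k2 where x: "x \<in> V" and k2: "\<forall>i<k2. (par ^^ i) x \<noteq> r" "(par ^^ k2) x = b"
    using assms(2) unfolding anc_def by blast
  have "(par ^^ i) x \<noteq> r" if "i < k1 + k2" for i
  proof (cases "i < k2")
    case False
    then have "(par ^^ i) x = (par ^^ (i - k2)) b"
      using k2(2) by (metis funpow_add le_add_diff_inverse2 not_less o_apply)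
    then show ?thesis using k1(1) that False by auto
  qed (use k2 in auto)
  moreover have "(par ^^ (k1 + k2)) x = a" using k1 k2 by (simp add: funpow_add)
  ultimately show ?thesis using x unfolding anc_def by blast
qed

lemma anc_parent:
  assumes "rooted_tree V r par" "anc V r par p u" "u \<noteq> p"
  shows "anc V r par p (par u)"
proof -
  obtain k where u: "u \<in> V" and k: "\<forall>i<k. (par ^^ i) u \<noteq> r" "(par ^^ k) u = p"
    using assms(2) unfolding anc_def by blast
  have "1 \<le> k" using k(2) assms(3) by (cases k) auto
  from anc_funpow[OF assms(1) u k(1) this] show ?thesis using k(2) by simp
qed

lemma anc_of_parent:
  assumes "anc V r par p (par y)" "y \<in> V" "y \<noteq> r"
  shows "anc V r par p y"
proof -
  obtain k where k: "\<forall>i<k. (par ^^ i) (par y) \<noteq> r" "(par ^^ k) (par y) = p"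
    using assms(1) unfolding anc_def by blast
  have "\<forall>i<Suc k. (par ^^ i) y \<noteq> r"
  proof (intro allI impI)
    fix i assume "i < Suc k"
    then show "(par ^^ i) y \<noteq> r"
      using k(1) assms(3) by (cases i) (auto simp: funpow_Suc_right simp del: funpow.simps)
  qed
  moreover have "(par ^^ Suc k) y = p"
    using k(2) by (simp add: funpow_Suc_right del: funpow.simps)
  ultimately show ?thesis using assms(2) unfolding anc_def by blast
qed

lemma anc_linear:
  assumes "rooted_tree V r par" "anc V r par s x" "anc V r par p x"
  shows "anc V r par s p \<or> anc V r par p s"
proof -
  obtain k1 where x: "x \<in> V" and k1: "\<forall>i<k1. (par ^^ i) x \<noteq> r" "(par ^^ k1) x = s"
    using assms(2) unfolding anc_def by blast
  obtain k2 where k2: "\<forall>i<k2. (par ^^ i) x \<noteq> r" "(par ^^ k2) x = p"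
    using assms(3) unfolding anc_def by blast
  show ?thesis
  proof (cases "k1 \<le> k2")
    case True
    then show ?thesis using anc_funpow[OF assms(1) x k2(1)] k1(2) k2(2) by auto
  next
    case False
    then show ?thesis using anc_funpow[OF assms(1) x k1(1)] k1(2) k2(2) by auto
  qed
qed

lemma burling_out_nbhd_branch:
  assumes bt: "burling_tree V r par l c" and "u \<in> V" and "v \<in> c u"
  shows "\<exists>s d. s \<in> V - {r} \<and> par s = par u \<and> u \<noteq> r
           \<and> c u = {w. anc V r par s w \<and> anc V r par w d}"
proof -
  have ur: "u \<noteq> r" and lu: "l (par u) \<noteq> u"
    using bt assms(2,3) unfolding burling_tree_def by fastforce+
  have "par u \<in> V" using bt ur assms(2) unfolding burling_tree_def rooted_tree_def by blast
  moreover have "u \<in> children V r par (par u)" using ur assms(2) unfolding children_def by blast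
  ultimately have "l (par u) \<in> children V r par (par u)"
    using bt unfolding burling_tree_def by blast
  then have s: "l (par u) \<in> V - {r}" "par (l (par u)) = par u" unfolding children_def by auto
  have "branch_set V r par (l (par u)) (c u)"
    using bt assms(2) ur lu unfolding burling_tree_def by blast
  then obtain d where "c u = {w. anc V r par (l (par u)) w \<and> anc V r par w d}"
    using assms(3) unfolding branch_set_def by blast
  then show ?thesis using s ur by blast
qed

lemma burling_adj_preserves_descendant:
  assumes bt: "burling_tree V r par l c" and "S \<subseteq> V" and "p \<in> S"
    and u: "u \<in> S - closed_in_nbhd c S p" and v: "v \<in> S - closed_in_nbhd c S p"
    and "adj c S u v" and pu: "anc V r par p u"
  shows "anc V r par p v"
proof -
  have rt: "rooted_tree V r par" using bt unfolding burling_tree_def by blast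
  have "u \<noteq> p" using u unfolding closed_in_nbhd_def by auto
  have uV: "u \<in> V" and vV: "v \<in> V" using u v \<open>S \<subseteq> V\<close> by auto
  show ?thesis
  proof (cases "v \<in> c u")
    case True
    obtain s d where s: "s \<in> V - {r}" "par s = par u"
      and cu: "c u = {w. anc V r par s w \<and> anc V r par w d}"
      using burling_out_nbhd_branch[OF bt uV True] by blast
    have "anc V r par p s"
      using anc_parent[OF rt pu \<open>u \<noteq> p\<close>] anc_of_parent[of V r par p s] s by auto
    moreover have "anc V r par s v" using True cu by auto
    ultimately show ?thesis by (rule anc_trans)
  next
    case False
    then have uc: "u \<in> c v" using \<open>adj c S u v\<close> unfolding adj_def arc_def by blast
    obtain s d where s: "s \<in> V - {r}" "par s = par v" "v \<noteq> r"
      and cv: "c v = {w. anc V r par s w \<and> anc V r par w d}"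
      using burling_out_nbhd_branch[OF bt vV uc] by blast
    have su: "anc V r par s u" and ud: "anc V r par u d" using uc cv by auto
    have "p \<notin> c v" using v \<open>p \<in> S\<close> unfolding closed_in_nbhd_def arc_def by auto
    then have "\<not> anc V r par s p" using cv anc_trans[OF pu ud] by auto
    moreover have "p \<in> V" using \<open>p \<in> S\<close> \<open>S \<subseteq> V\<close> by auto
    ultimately have "anc V r par p s" "s \<noteq> p"
      using anc_linear[OF rt su pu] anc_refl by blast+
    then have "anc V r par p (par v)" using anc_parent[OF rt] s(2) by metis
    then show ?thesis using anc_of_parent vV s(3) by metis
  qed
qed

lemma hole_has_nonneighbour:
  assumes "is_hole c S H" and "p \<in> H"
  obtains z where "z \<in> H" "z \<noteq> p" "\<not> adj c S p z"
proof -
  obtain xs where xs: "distinct xs" "set xs = H" "length xs \<ge> 4" and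
    ad: "\<forall>i < length xs. \<forall>j < length xs.
        adj c S (xs ! i) (xs ! j) \<longleftrightarrow> (j = Suc i mod length xs \<or> i = Suc j mod length xs)"
    using assms(1) unfolding is_hole_def by blast
  define n where "n = length xs"
  obtain j where j: "j < n" "xs ! j = p"
    using assms(2) xs(2) unfolding n_def by (metis in_set_conv_nth)
  define k where "k = (j + 2) mod n"
  have n4: "n \<ge> 4" using xs(3) n_def by simp
  have k: "k < n" using n4 unfolding k_def by simp
  have "k \<noteq> Suc j mod n" "j \<noteq> Suc k mod n" "k \<noteq> j"
    using j(1) n4 k unfolding k_def by (auto simp: mod_if split: if_splits)
  then show ?thesis
    using that[of "xs ! k"] ad j k xs(1,2) unfolding n_def by (auto simp: nth_eq_iff_index_eq)
qed

lemma component_invariant: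
  assumes "is_component c S X C" "z \<in> C" "P z"
    and step: "\<And>u v. u \<in> X \<Longrightarrow> v \<in> X \<Longrightarrow> adj c S u v \<Longrightarrow> P u \<Longrightarrow> P v"
  shows "\<forall>v \<in> C. P v"
proof
  define R where "R = (\<lambda>u v. u \<in> X \<and> v \<in> X \<and> adj c S u v)"
  obtain x where C: "C = {y. R\<^sup>*\<^sup>* x y}"
    using assms(1) unfolding is_component_def R_def by blast
  have "symp R\<^sup>*\<^sup>*"
    by (rule symp_rtranclp) (auto simp: R_def adj_def intro: sympI)
  fix v assume "v \<in> C"
  then have "R\<^sup>*\<^sup>* z v" using assms(2) C \<open>symp R\<^sup>*\<^sup>*\<close>
    by (auto dest: sympD intro: rtranclp_trans)
  then show "P v"
    by (induction rule: rtranclp_induct) (use assms(3) step R_def in auto)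
qed

theorem lemma6p1:
  assumes "burling_tree V r par l c"
    and "S \<subseteq> V"
    and "is_hole c S H"
    and "is_pivot V r par c S H p"
    and "is_component c S (S - closed_in_nbhd c S p) C"
    and "H - closed_in_nbhd c S p \<subseteq> C"
  shows "\<forall>v \<in> C. anc V r par p v"
proof -
  have "p \<in> H" using assms(4) unfolding is_pivot_def sink_in_def by blast
  then have "p \<in> S" using assms(3) unfolding is_hole_def by blast
  obtain z where z: "z \<in> H" "z \<noteq> p" "\<not> adj c S p z"
    using hole_has_nonneighbour[OF assms(3) \<open>p \<in> H\<close>] by blast
  have "anc V r par p z"
    using assms(4) z unfolding is_pivot_def by blast
  moreover have "z \<in> C"
    using assms(6) z unfolding closed_in_nbhd_def adj_def by auto
  ultimately show ?thesis
    using component_invariant[OF assms(5)]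
      burling_adj_preserves_descendant[OF assms(1,2) \<open>p \<in> S\<close>] by blast
qed

end
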